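(* If $C$ is a smooth cone in a finite-dimensional Euclidean space $X$, then its polar cone $C^\circ$ is also smooth.
   Context: A cone $C$ is regular if it is pointed, closed, convex, with nonempty interior. A ray is $\{\lambda x:\lambda\ge0\}$, $x\ne0$; an extreme ray of $C$ is a ray in $C$ which is a face of $C$ (a convex $\mathcal F\subset C$ such that $x,y\in C$, $\lambda x+(1-\lambda)y\in\mathcal F$ for some $0<\lambda<1$ implies $x,y\in\mathcal F$). A regular cone $C$ is smooth if every boundary point of $C$ lies on an extreme ray of $C$ and, for every non-zero point $x$ of any extreme ray, the normal cone $N_C(x)$ has dimension one. $C^\circ=\{y:\langle x,y\rangle\le0\ \forall x\in C\}$. *)

theory Defs
  imports "HOL-Analysis.Analysis"
begin

definition pointed_cone :: "'a::real_vector set \<Rightarrow> bool" where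
  "pointed_cone C \<longleftrightarrow> C \<inter> uminus ` C = {0}"

definition regular_cone :: "'a::euclidean_space set \<Rightarrow> bool" where
  "regular_cone C \<longleftrightarrow> cone C \<and> pointed_cone C \<and> closed C \<and> convex C \<and> interior C \<noteq> {}"

definition is_face :: "'a::real_vector set \<Rightarrow> 'a set \<Rightarrow> bool" where
  "is_face F C \<longleftrightarrow> convex F \<and> F \<subseteq> C \<and>
     (\<forall>x\<in>C. \<forall>y\<in>C. \<forall>l::real. 0 < l \<and> l < 1 \<and> l *\<^sub>R x + (1 - l) *\<^sub>R y \<in> F \<longrightarrow> x \<in> F \<and> y \<in> F)"

definition ray :: "'a::real_vector \<Rightarrow> 'a set" where
  "ray x = {l *\<^sub>R x | l::real. 0 \<le> l}"

definition extreme_ray :: "'a::real_vector set \<Rightarrow> 'a set \<Rightarrow> bool" where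
  "extreme_ray C R \<longleftrightarrow> (\<exists>x. x \<noteq> 0 \<and> R = ray x) \<and> R \<subseteq> C \<and> is_face R C"

definition normal_cone :: "'a::real_inner set \<Rightarrow> 'a \<Rightarrow> 'a set" where
  "normal_cone C x = {y. \<forall>z\<in>C. inner y (z - x) \<le> 0}"

definition smooth_cone :: "'a::euclidean_space set \<Rightarrow> bool" where
  "smooth_cone C \<longleftrightarrow> regular_cone C \<and>
     (\<forall>x\<in>frontier C. \<exists>R. extreme_ray C R \<and> x \<in> R) \<and>
     (\<forall>R x. extreme_ray C R \<and> x \<in> R \<and> x \<noteq> 0 \<longrightarrow> aff_dim (normal_cone C x) = 1)"

definition polar_cone :: "'a::real_inner set \<Rightarrow> 'a set" where
  "polar_cone C = {y. \<forall>x\<in>C. inner x y \<le> 0}"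

end

theory Submission
  imports Defs
begin

text \<open>For a closed convex cone \<open>C\<close> with polar \<open>K\<close> the normal cones are
  \<open>N\<^sub>C(x) = K \<inter> x\<^sup>\<bottom>\<close> and \<open>N\<^sub>K(y) = C \<inter> y\<^sup>\<bottom>\<close>. For nonzero \<open>x \<in> C\<close>, \<open>y \<in> K\<close> with
  \<open>x \<bullet> y = 0\<close>, smoothness of \<open>C\<close> forces both sets to be rays: the dimension condition gives
  \<open>N\<^sub>C(x) = ray y\<close>, an exposed face and hence an extreme ray of \<open>K\<close>, and the extreme-ray
  condition gives \<open>N\<^sub>K(y) = ray x\<close>, of dimension one. Every nonzero frontier point of \<open>K\<close>,
  and every nonzero point on an extreme ray of \<open>K\<close>, has such a partner \<open>x\<close> (the normal of a
  supporting hyperplane), which makes \<open>K\<close> smooth.\<close>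

lemma normal_cone_interior:
  fixes S :: "'a::real_inner set"
  assumes "c \<in> interior S"
  shows "normal_cone S c = {0}"
proof
  show "{0} \<subseteq> normal_cone S c" by (simp add: normal_cone_def)
  show "normal_cone S c \<subseteq> {0}"
  proof
    fix y assume y: "y \<in> normal_cone S c"
    show "y \<in> {0}"
    proof (rule ccontr)
      assume "y \<notin> {0}"
      then have "y \<noteq> 0" by simp
      obtain e where e: "e > 0" "ball c e \<subseteq> S" using assms mem_interior by blast
      define t where "t = e / (2 * norm y)"
      have t: "t > 0" using e \<open>y \<noteq> 0\<close> by (simp add: t_def)
      have "dist c (c + t *\<^sub>R y) < e" using e \<open>y \<noteq> 0\<close> by (simp add: dist_norm t_def)
      then have "c + t *\<^sub>R y \<in> S" using e by auto
      then have "inner y (c + t *\<^sub>R y - c) \<le> 0" using y unfolding normal_cone_def by blast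
      then have "t * (y \<bullet> y) \<le> 0" by simp
      with t \<open>y \<noteq> 0\<close> show False by (smt (verit) inner_gt_zero_iff mult_pos_pos)
    qed
  qed
qed

lemma frontier_if_nonzero_normal:
  fixes S :: "'a::real_inner set"
  assumes "closed S" "x \<in> S" "y \<in> normal_cone S x" "y \<noteq> 0"
  shows "x \<in> frontier S"
  using assms normal_cone_interior[of x S] by (auto simp: frontier_def)

lemma normal_cone_of_cone:
  assumes "cone S" "x \<in> S"
  shows "normal_cone S x = {y \<in> polar_cone S. inner x y = 0}"
proof (intro set_eqI iffI)
  fix y assume y: "y \<in> normal_cone S x"
  have "0 \<in> S" "2 *\<^sub>R x \<in> S" using assms cone_contains_0 by (auto simp: cone_def)
  then have "inner y (0 - x) \<le> 0" "inner y (2 *\<^sub>R x - x) \<le> 0"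
    using y by (auto simp: normal_cone_def)
  then have "inner x y = 0" by (simp add: inner_commute algebra_simps)
  with y show "y \<in> {y \<in> polar_cone S. inner x y = 0}"
    by (auto simp: normal_cone_def polar_cone_def inner_commute inner_diff_right)
qed (auto simp: polar_cone_def normal_cone_def inner_commute inner_diff_right)

lemma zero_in_polar_cone [simp]: "0 \<in> polar_cone S"
  by (simp add: polar_cone_def)

lemma polar_cone_as_Inter: "polar_cone S = (\<Inter>x\<in>S. {y. inner x y \<le> 0})"
  by (auto simp: polar_cone_def)

lemma cone_polar_cone: "cone (polar_cone S)"
  by (auto simp: cone_def polar_cone_def mult_nonneg_nonpos)

lemma closed_polar_cone: "closed (polar_cone S)"
  by (simp add: polar_cone_as_Inter closed_INT closed_halfspace_le)

lemma convex_polar_cone: "convex (polar_cone S)"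
  by (simp add: polar_cone_as_Inter convex_INT convex_halfspace_le)

lemma polar_cone_polar_cone:
  fixes S :: "'a::euclidean_space set"
  assumes "cone S" "closed S" "convex S" "S \<noteq> {}"
  shows "polar_cone (polar_cone S) = S"
proof
  show "S \<subseteq> polar_cone (polar_cone S)" by (auto simp: polar_cone_def inner_commute)
  show "polar_cone (polar_cone S) \<subseteq> S"
  proof
    fix z assume z: "z \<in> polar_cone (polar_cone S)"
    show "z \<in> S"
    proof (rule ccontr)
      assume "z \<notin> S"
      then obtain a b where ab: "inner a z < b" "\<forall>x\<in>S. inner a x > b"
        using separating_hyperplane_closed_point assms(2,3) by blast
      have "0 \<in> S" using assms(1,4) cone_contains_0 by blast
      then have "b < 0" using ab by force
      have "inner a x \<ge> 0" if "x \<in> S" for x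
      proof (rule ccontr)
        assume "\<not> inner a x \<ge> 0"
        then have "(b / inner a x) *\<^sub>R x \<in> S"
          using assms(1) that \<open>b < 0\<close> by (simp add: cone_def divide_nonpos_neg)
        with ab(2) \<open>\<not> inner a x \<ge> 0\<close> show False by fastforce
      qed
      then have "-a \<in> polar_cone S" by (auto simp: polar_cone_def inner_commute)
      then have "inner (-a) z \<le> 0" using z unfolding polar_cone_def by blast
      then have "inner a z \<ge> 0" by simp
      with ab \<open>b < 0\<close> show False by linarith
    qed
  qed
qed

lemma pointed_coneI:
  assumes "0 \<in> C" "\<And>x. x \<in> C \<Longrightarrow> -x \<in> C \<Longrightarrow> x = 0"
  shows "pointed_cone C"
  using assms by (force simp: pointed_cone_def)

lemma pointed_coneD:
  assumes "pointed_cone C" "x \<in> C" "-x \<in> C"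
  shows "x = 0"
  using assms unfolding pointed_cone_def by (metis IntI image_eqI minus_minus singletonD)

lemma pointed_polar_cone:
  fixes C :: "'a::real_inner set"
  assumes "interior C \<noteq> {}"
  shows "pointed_cone (polar_cone C)"
proof (rule pointed_coneI)
  show "0 \<in> polar_cone C" by simp
  fix y assume "y \<in> polar_cone C" "-y \<in> polar_cone C"
  then have "inner z y = 0" if "z \<in> C" for z
    using that by (force simp: polar_cone_def)
  moreover obtain c where c: "c \<in> interior C" using assms by blast
  ultimately have "y \<in> normal_cone C c"
    using interior_subset by (fastforce simp: normal_cone_def inner_diff_right inner_commute)
  then show "y = 0" using normal_cone_interior[OF c] by blast
qed

text \<open>If the polar cone lay in a hyperplane \<open>a\<^sup>\<bottom>\<close>, both \<open>a\<close> and \<open>-a\<close> would lie in the bipolar.\<close>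
lemma interior_polar_cone_nonempty:
  fixes C :: "'a::euclidean_space set"
  assumes "cone C" "pointed_cone C" "closed C" "convex C" "C \<noteq> {}"
  shows "interior (polar_cone C) \<noteq> {}"
proof
  assume "interior (polar_cone C) = {}"
  then obtain a b where a: "a \<noteq> 0" "polar_cone C \<subseteq> {x. a \<bullet> x = b}"
    using empty_interior_subset_hyperplane convex_polar_cone by metis
  moreover have "0 \<in> polar_cone C" by simp
  ultimately have "a \<bullet> 0 = b" by blast
  then have "b = 0" by simp
  with a have "a \<bullet> y = 0" if "y \<in> polar_cone C" for y
    using that by auto
  then have "a \<in> polar_cone (polar_cone C)" "-a \<in> polar_cone (polar_cone C)"
    by (auto simp: polar_cone_def inner_commute)
  then have "a = 0" using assms polar_cone_polar_cone pointed_coneD by metis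
  with a show False by simp
qed

lemma regular_cone_polar_cone:
  fixes C :: "'a::euclidean_space set"
  assumes "regular_cone C"
  shows "regular_cone (polar_cone C)"
proof -
  have "C \<noteq> {}" using assms interior_subset by (auto simp: regular_cone_def)
  with assms show ?thesis
    by (simp add: regular_cone_def cone_polar_cone closed_polar_cone convex_polar_cone
        pointed_polar_cone interior_polar_cone_nonempty)
qed

lemma zero_in_ray [simp]: "0 \<in> ray x"
  by (force simp: ray_def)

lemma in_ray_self [simp]: "x \<in> ray x"
  by (force simp: ray_def intro: exI[of _ 1])

lemma ray_subset_cone: "cone S \<Longrightarrow> x \<in> S \<Longrightarrow> ray x \<subseteq> S"
  by (auto simp: ray_def cone_def)

lemma aff_dim_ray:
  fixes x :: "'a::euclidean_space"
  assumes "x \<noteq> 0"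
  shows "aff_dim (ray x) = 1"
proof -
  have "ray x \<subseteq> span {x}" by (auto simp: ray_def span_singleton)
  then have "dim (ray x) = 1"
    using assms dim_subset[of "{x}" "ray x"] dim_subset[of "ray x" "span {x}"] by simp
  then show ?thesis by (simp add: aff_dim_zero hull_inc)
qed

lemma aff_dim_one_subset_span:
  fixes N :: "'a::euclidean_space set"
  assumes "aff_dim N = 1" "0 \<in> N" "y \<in> N" "y \<noteq> 0"
  shows "N \<subseteq> span {y}"
proof -
  have "dim N = 1" using assms(1,2) by (simp add: aff_dim_zero hull_inc)
  then have "span {y} = span N" using assms(3,4) by (intro dim_eq_span) auto
  then show ?thesis using span_superset by blast
qed

lemma extreme_rayI:
  assumes "x \<noteq> 0" "cone K" "x \<in> K" "is_face (ray x) K"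
  shows "extreme_ray K (ray x)"
  using assms ray_subset_cone by (auto simp: extreme_ray_def)

lemma is_face_supporting_hyperplane:
  assumes "convex K" "\<forall>a\<in>K. inner x a \<le> 0"
  shows "is_face {a \<in> K. inner x a = 0} K"
  unfolding is_face_def
proof (intro conjI ballI allI impI)
  have "{a \<in> K. inner x a = 0} = K \<inter> {a. inner x a = 0}" by blast
  then show "convex {a \<in> K. inner x a = 0}" using assms(1) by (simp add: convex_Int convex_hyperplane)
  fix a b and l :: real
  assume ab: "a \<in> K" "b \<in> K" and l: "0 < l \<and> l < 1 \<and> l *\<^sub>R a + (1 - l) *\<^sub>R b \<in> {a \<in> K. inner x a = 0}"
  then have "l * inner x a + (1 - l) * inner x b = 0" by (simp add: inner_add_right)
  moreover have "l * inner x a \<le> 0" "(1 - l) * inner x b \<le> 0"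
    using assms(2) ab l by (auto simp: mult_nonneg_nonpos)
  ultimately have "inner x a = 0" "inner x b = 0" using l by (auto simp: add_nonpos_eq_0_iff)
  with ab show "a \<in> {a \<in> K. inner x a = 0}" "b \<in> {a \<in> K. inner x a = 0}" by auto
qed auto

text \<open>Any \<open>w \<in> S\<close> gives a point \<open>y + t (y - w)\<close> of a small ball around \<open>y\<close>, and \<open>y\<close> is
  a proper convex combination of that point and \<open>w\<close>.\<close>
lemma is_face_interior_imp_eq:
  fixes S :: "'a::real_normed_vector set"
  assumes "is_face F S" "y \<in> F" "y \<in> interior S"
  shows "F = S"
proof
  show "F \<subseteq> S" using assms(1) by (simp add: is_face_def)
  show "S \<subseteq> F"
  proof
    fix w assume "w \<in> S"
    obtain e where e: "e > 0" "ball y e \<subseteq> S" using assms(3) mem_interior by blast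
    define t where "t = e / (2 * (norm (y - w) + 1))"
    have denom: "0 < 2 * (norm (y - w) + 1)" by (simp add: add_nonneg_pos)
    then have t: "t > 0" using e by (simp add: t_def)
    have "t * norm (y - w) < e"
    proof -
      have "t * norm (y - w) \<le> t * (norm (y - w) + 1)" using t by simp
      also have "\<dots> = e / 2" unfolding t_def using denom by (simp add: field_simps)
      finally show ?thesis using e by simp
    qed
    then have "y + t *\<^sub>R (y - w) \<in> S" using e t by (auto simp: dist_norm)
    moreover define l where "l = 1 / (1 + t)"
    have l: "0 < l" "l < 1" using t by (auto simp: l_def)
    have "l *\<^sub>R (y + t *\<^sub>R (y - w)) + (1 - l) *\<^sub>R w = y"
    proof -
      have "l * (1 + t) = 1" "1 - l = l * t" using t by (auto simp: l_def field_simps)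
      then show ?thesis by (simp add: algebra_simps) (metis scaleR_add_left scaleR_one add.commute)
    qed
    ultimately show "w \<in> F" using assms(1,2) \<open>w \<in> S\<close> l unfolding is_face_def by metis
  qed
qed

text \<open>Writing \<open>x + v\<close> as the midpoint of \<open>2x\<close> and \<open>2v\<close>, the face property puts both on the ray.\<close>
lemma extreme_ray_sum_imp_in_ray:
  assumes "cone C" "convex C" "extreme_ray C R" "x \<in> C" "v \<in> C" "x \<noteq> 0" "x + v \<in> R"
  shows "v \<in> ray x"
proof -
  obtain z where Rz: "R = ray z" and face: "is_face R C" using assms(3) by (auto simp: extreme_ray_def)
  have C2: "2 *\<^sub>R x \<in> C" "2 *\<^sub>R v \<in> C" using assms(1,4,5) by (auto simp: cone_def)
  have "(1/2) *\<^sub>R (2 *\<^sub>R x) + (1 - 1/2) *\<^sub>R (2 *\<^sub>R v) \<in> R" using assms(7) by simp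
  moreover have "0 < (1/2::real)" "(1/2::real) < 1" by simp_all
  ultimately have "2 *\<^sub>R x \<in> R \<and> 2 *\<^sub>R v \<in> R" using face C2 unfolding is_face_def by blast
  then obtain a b where ab: "2 *\<^sub>R x = a *\<^sub>R z" "2 *\<^sub>R v = b *\<^sub>R z" "0 \<le> a" "0 \<le> b"
    unfolding Rz ray_def by blast
  with assms(6) have "a \<noteq> 0" by auto
  have "x = (a / 2) *\<^sub>R z" "v = (b / 2) *\<^sub>R z"
    using arg_cong[OF ab(1), of "scaleR (1/2)"] arg_cong[OF ab(2), of "scaleR (1/2)"] by simp_all
  then have "v = (b / a) *\<^sub>R x" using \<open>a \<noteq> 0\<close> by simp
  with ab show ?thesis by (auto simp: ray_def)
qed

locale smooth_cone_polarity =
  fixes C :: "'a::euclidean_space set"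
  assumes smooth: "smooth_cone C"
begin

abbreviation K :: "'a set" where "K \<equiv> polar_cone C"

lemma cone: "cone C" and pointed: "pointed_cone C" and closed: "closed C" and convex: "convex C"
  and regular: "regular_cone C" and nonempty: "C \<noteq> {}"
  using smooth interior_subset by (auto simp: smooth_cone_def regular_cone_def)

lemma frontier_on_extreme_ray: "x \<in> frontier C \<Longrightarrow> \<exists>R. extreme_ray C R \<and> x \<in> R"
  using smooth by (simp add: smooth_cone_def)

lemma aff_dim_normal_cone:
  "extreme_ray C R \<Longrightarrow> x \<in> R \<Longrightarrow> x \<noteq> 0 \<Longrightarrow> aff_dim (normal_cone C x) = 1"
  using smooth by (simp add: smooth_cone_def)

lemma polar_K: "polar_cone K = C"
  using cone closed convex nonempty by (rule polar_cone_polar_cone)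

lemma pointed_K: "pointed_cone K" and interior_K: "interior K \<noteq> {}"
  using regular_cone_polar_cone[OF regular] by (simp_all add: regular_cone_def)

lemma normal_cone_C: "x \<in> C \<Longrightarrow> normal_cone C x = {y \<in> K. inner x y = 0}"
  using cone by (rule normal_cone_of_cone)

lemma normal_cone_K: "y \<in> K \<Longrightarrow> normal_cone K y = {x \<in> C. inner y x = 0}"
  using normal_cone_of_cone[OF cone_polar_cone, of y C] polar_K by simp

definition orthogonal_pair :: "'a \<Rightarrow> 'a \<Rightarrow> bool" where
  "orthogonal_pair x y \<longleftrightarrow> x \<in> C \<and> x \<noteq> 0 \<and> y \<in> K \<and> y \<noteq> 0 \<and> inner x y = 0"

lemma frontier_if_orthogonal:
  assumes "x \<in> C" "y \<in> K" "y \<noteq> 0" "inner x y = 0"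
  shows "x \<in> frontier C"
  using assms closed normal_cone_C frontier_if_nonzero_normal by blast

text \<open>Here the dimension condition of smoothness is used; pointedness of \<open>K\<close> then excludes
  the negative half of the line through \<open>y\<close>.\<close>
lemma normal_cone_C_eq_ray:
  assumes "orthogonal_pair x y"
  shows "normal_cone C x = ray y"
proof
  have x: "x \<in> C" "x \<noteq> 0" and y: "y \<in> K" "y \<noteq> 0" and xy: "inner x y = 0"
    using assms by (auto simp: orthogonal_pair_def)
  show "ray y \<subseteq> normal_cone C x"
    using x(1) y(1) xy cone_polar_cone by (auto simp: normal_cone_C ray_def cone_def)
  show "normal_cone C x \<subseteq> ray y"
  proof
    fix w assume w: "w \<in> normal_cone C x"
    have "x \<in> frontier C" using frontier_if_orthogonal x(1) y xy by blast
    then obtain R where "extreme_ray C R" "x \<in> R" using frontier_on_extreme_ray by blast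
    then have "aff_dim (normal_cone C x) = 1" using x(2) aff_dim_normal_cone by blast
    moreover have "0 \<in> normal_cone C x" "y \<in> normal_cone C x"
      using x(1) y(1) xy by (auto simp: normal_cone_C)
    ultimately have "w \<in> span {y}" using aff_dim_one_subset_span w y(2) by blast
    then obtain t where t: "w = t *\<^sub>R y" by (auto simp: span_singleton)
    have "t \<ge> 0"
    proof (rule ccontr)
      assume "\<not> t \<ge> 0"
      have "w \<in> K" using w x(1) by (simp add: normal_cone_C)
      moreover have "0 \<le> - 1 / t" using \<open>\<not> t \<ge> 0\<close> by simp
      ultimately have "(- 1 / t) *\<^sub>R w \<in> K" using cone_polar_cone unfolding cone_def by blast
      then have "-y \<in> K" using \<open>\<not> t \<ge> 0\<close> t by simp
      with y show False using pointed_K pointed_coneD by blast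
    qed
    with t show "w \<in> ray y" by (auto simp: ray_def)
  qed
qed

text \<open>Here the extreme-ray condition of smoothness is used: \<open>x + v\<close> lies on the frontier of
  \<open>C\<close>, hence on an extreme ray, which must then contain \<open>v\<close> as a multiple of \<open>x\<close>.\<close>
lemma normal_cone_K_eq_ray:
  assumes "orthogonal_pair x y"
  shows "normal_cone K y = ray x"
proof
  have x: "x \<in> C" "x \<noteq> 0" and y: "y \<in> K" "y \<noteq> 0" and xy: "inner x y = 0"
    using assms by (auto simp: orthogonal_pair_def)
  show "ray x \<subseteq> normal_cone K y"
    using x(1) y(1) xy cone by (auto simp: normal_cone_K ray_def cone_def inner_commute)
  show "normal_cone K y \<subseteq> ray x"
  proof
    fix v assume "v \<in> normal_cone K y"
    then have v: "v \<in> C" "inner y v = 0" using y(1) by (auto simp: normal_cone_K)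
    have "x + v \<in> C" using x(1) v(1) cone convex convex_cone by blast
    moreover have "inner (x + v) y = 0" using xy v(2) by (simp add: inner_add_left inner_commute[of y v])
    ultimately obtain R where "extreme_ray C R" "x + v \<in> R"
      using frontier_on_extreme_ray frontier_if_orthogonal y by blast
    then show "v \<in> ray x"
      using extreme_ray_sum_imp_in_ray cone convex x v(1) by blast
  qed
qed

lemma extreme_ray_K:
  assumes "orthogonal_pair x y"
  shows "extreme_ray K (ray y)"
proof (rule extreme_rayI)
  have x: "x \<in> C" and y: "y \<in> K" "y \<noteq> 0"
    using assms by (auto simp: orthogonal_pair_def)
  show "y \<noteq> 0" "y \<in> K" "cone K" using y cone_polar_cone by auto
  have "ray y = {a \<in> K. inner x a = 0}"
    using normal_cone_C_eq_ray[OF assms] normal_cone_C[OF x] by simp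
  moreover have "\<forall>a\<in>K. inner x a \<le> 0" using x by (simp add: polar_cone_def)
  ultimately show "is_face (ray y) K"
    using is_face_supporting_hyperplane[OF convex_polar_cone, of C x] by simp
qed

lemma orthogonal_pair_exists: "\<exists>x y. orthogonal_pair x y"
proof -
  obtain e :: 'a where "e \<in> Basis" using nonempty_Basis by blast
  then have "e \<noteq> 0" by auto
  then have "C \<noteq> UNIV" using pointed_coneD[OF pointed, of e] by auto
  then obtain x where "x \<in> frontier C" using frontier_not_empty nonempty by blast
  then obtain R where "extreme_ray C R" using frontier_on_extreme_ray by blast
  then obtain x0 where R: "extreme_ray C (ray x0)" "x0 \<noteq> 0" "ray x0 \<subseteq> C"
    by (auto simp: extreme_ray_def)
  then have "aff_dim (normal_cone C x0) = 1" using aff_dim_normal_cone in_ray_self by blast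
  then have "normal_cone C x0 \<noteq> {0}" by (metis aff_dim_sing zero_neq_one)
  moreover have "0 \<in> normal_cone C x0" by (simp add: normal_cone_def)
  ultimately obtain y where y: "y \<in> normal_cone C x0" "y \<noteq> 0" by blast
  have "x0 \<in> C" using R(3) in_ray_self by blast
  with y have "orthogonal_pair x0 y" using R(2) normal_cone_C by (simp add: orthogonal_pair_def)
  then show ?thesis by blast
qed

text \<open>A supporting hyperplane of \<open>K\<close> at \<open>y\<close> has a normal in \<open>polar_cone K = C\<close>.\<close>
lemma orthogonal_pair_if_frontier_K:
  assumes "y \<in> frontier K" "y \<noteq> 0"
  shows "\<exists>x. orthogonal_pair x y"
proof -
  have yK: "y \<in> K" using assms(1) closed_polar_cone frontier_subset_closed by blast
  have "y \<in> closure K" using yK closure_subset by blast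
  moreover have "y \<notin> rel_interior K"
    using assms(1) interior_K rel_interior_nonempty_interior by (auto simp: frontier_def)
  ultimately obtain a where a: "a \<noteq> 0" "\<And>w. w \<in> closure K \<Longrightarrow> a \<bullet> y \<le> a \<bullet> w"
    by (rule supporting_hyperplane_relative_frontier[OF convex_polar_cone]) auto
  have "-a \<in> normal_cone K y"
    unfolding normal_cone_def using a(2) closure_subset by (auto simp: inner_diff_right)
  then have "-a \<in> C" "inner y (-a) = 0" using normal_cone_K[OF yK] by blast+
  then have "orthogonal_pair (-a) y"
    using a(1) yK assms(2) inner_commute[of y "-a"] unfolding orthogonal_pair_def by simp
  then show ?thesis by blast
qed

lemma frontier_K_on_extreme_ray:
  assumes "y \<in> frontier K"
  shows "\<exists>R. extreme_ray K R \<and> y \<in> R"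
proof (cases "y = 0")
  case True
  obtain x y' where "orthogonal_pair x y'" using orthogonal_pair_exists by blast
  with True show ?thesis using extreme_ray_K zero_in_ray by blast
next
  case False
  then obtain x where "orthogonal_pair x y" using assms orthogonal_pair_if_frontier_K by blast
  then show ?thesis using extreme_ray_K in_ray_self by blast
qed

text \<open>An extreme ray meeting the interior of \<open>K\<close> would be all of \<open>K\<close>; then any orthogonal pair
  \<open>(x\<^sub>1, y\<^sub>1)\<close> has \<open>y\<^sub>1\<close> on that ray, so \<open>x\<^sub>1\<close> is orthogonal to \<open>y\<close> as well.\<close>
lemma orthogonal_pair_if_extreme_ray_K:
  assumes R: "extreme_ray K R" "y \<in> R" "y \<noteq> 0"
  shows "\<exists>x. orthogonal_pair x y"
proof -
  obtain y0 where y0: "R = ray y0" and face: "is_face R K" and "R \<subseteq> K"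
    using R(1) by (auto simp: extreme_ray_def)
  then have yK: "y \<in> K" using R(2) by blast
  show ?thesis
  proof (cases "y \<in> interior K")
    case False
    then have "y \<in> frontier K" using yK by (simp add: frontier_def closure_closed closed_polar_cone)
    then show ?thesis using orthogonal_pair_if_frontier_K R(3) by blast
  next
    case True
    obtain x1 y1 where xy1: "orthogonal_pair x1 y1" using orthogonal_pair_exists by blast
    then have "y1 \<in> R"
      using is_face_interior_imp_eq[OF face R(2) True] by (simp add: orthogonal_pair_def)
    then obtain s1 where "y1 = s1 *\<^sub>R y0" using y0 by (auto simp: ray_def)
    with xy1 have "inner x1 y0 = 0" by (simp add: orthogonal_pair_def) blast
    moreover obtain s where "y = s *\<^sub>R y0" using R(2) y0 by (auto simp: ray_def)
    ultimately have "inner x1 y = 0" by simp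
    with xy1 yK R(3) show ?thesis unfolding orthogonal_pair_def by blast
  qed
qed

lemma aff_dim_normal_cone_K:
  assumes "extreme_ray K R" "y \<in> R" "y \<noteq> 0"
  shows "aff_dim (normal_cone K y) = 1"
proof -
  obtain x where xy: "orthogonal_pair x y" using orthogonal_pair_if_extreme_ray_K assms by blast
  then have "x \<noteq> 0" by (simp add: orthogonal_pair_def)
  with normal_cone_K_eq_ray[OF xy] show ?thesis by (simp add: aff_dim_ray)
qed

end

theorem corollary1:
  fixes C :: "'a::euclidean_space set"
  assumes "smooth_cone C"
  shows "smooth_cone (polar_cone C)"
proof -
  interpret smooth_cone_polarity C using assms by unfold_locales
  show ?thesis
    unfolding smooth_cone_def
    using regular_cone_polar_cone[OF regular] frontier_K_on_extreme_ray aff_dim_normal_cone_K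
    by blast
qed

end
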